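(* Let $T>0$, $0<\eta<T$, $0<\alpha<\frac{1}{\eta}$, let $f\in C([0,\infty),[0,\infty))$, and let $a\in C([0,T],[0,\infty))$ with $a(t_0)>0$ for some $t_0\in[0,T]$. Consider the boundary value problem \[ u''(t)+a(t)f(u(t))=0,\quad 0<t<T,\qquad u'(0)=0,\quad u(T)=\alpha\int_0^{\eta}u(s)\,ds. \tag{P} \] Assume that $f_0=\alpha_1\in[0,\theta_1\Lambda_1)$ for some $\theta_1\in(0,1]$, and $f_\infty=\beta_1\in\left(\frac{\theta_2}{\gamma}\Lambda_2,\infty\right)$ for some $\theta_2\ge1$. Then (P) has at least one positive solution.
   Context: $f_0=\lim_{u\to0^+}\frac{f(u)}{u}$, $f_\infty=\lim_{u\to\infty}\frac{f(u)}{u}$ (assumed to exist with the stated values; $\alpha_1,\beta_1$ are just names for these limits). $\gamma=\dfrac{\alpha\eta(T-\eta)}{T-\alpha\eta^2}$, $\Lambda_1=\dfrac{1-\alpha\eta}{\int_0^T (T-s)a(s)\,ds}$, and $\Lambda_2=\dfrac{1-\alpha\eta}{\gamma\left(\int_\eta^T (T-s)a(s)\,ds+\frac12\int_0^\eta\left[2(T-\eta)+\alpha(\eta^2-s^2)\right]a(s)\,ds\right)}$. A positive solution of (P) is a function $u\in C^2([0,T])$ satisfying (P) with $u(t)\ge0$ on $[0,T]$ and $u$ not identically zero. *)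

theory Defs
  imports "HOL-Analysis.Analysis"
begin

definition gamma_c :: "real \<Rightarrow> real \<Rightarrow> real \<Rightarrow> real" where
  "gamma_c T \<eta> \<alpha> = \<alpha> * \<eta> * (T - \<eta>) / (T - \<alpha> * \<eta>^2)"

definition Lambda1 :: "real \<Rightarrow> real \<Rightarrow> real \<Rightarrow> (real \<Rightarrow> real) \<Rightarrow> real" where
  "Lambda1 T \<eta> \<alpha> a = (1 - \<alpha> * \<eta>) / integral {0..T} (\<lambda>s. (T - s) * a s)"

definition Lambda2 :: "real \<Rightarrow> real \<Rightarrow> real \<Rightarrow> (real \<Rightarrow> real) \<Rightarrow> real" where
  "Lambda2 T \<eta> \<alpha> a = (1 - \<alpha> * \<eta>) /
     (gamma_c T \<eta> \<alpha> * (integral {\<eta>..T} (\<lambda>s. (T - s) * a s)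
        + 1/2 * integral {0..\<eta>} (\<lambda>s. (2 * (T - \<eta>) + \<alpha> * (\<eta>^2 - s^2)) * a s)))"

definition C2_with :: "real \<Rightarrow> (real \<Rightarrow> real) \<Rightarrow> (real \<Rightarrow> real) \<Rightarrow> (real \<Rightarrow> real) \<Rightarrow> bool" where
  "C2_with T u u1 u2 \<longleftrightarrow>
     (\<forall>t\<in>{0..T}. (u has_real_derivative u1 t) (at t within {0..T})) \<and>
     (\<forall>t\<in>{0..T}. (u1 has_real_derivative u2 t) (at t within {0..T})) \<and>
     continuous_on {0..T} u2"

definition positive_solution_P ::
  "real \<Rightarrow> real \<Rightarrow> real \<Rightarrow> (real \<Rightarrow> real) \<Rightarrow> (real \<Rightarrow> real) \<Rightarrow> (real \<Rightarrow> real) \<Rightarrow> bool" where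
  "positive_solution_P T \<eta> \<alpha> a f u \<longleftrightarrow>
     (\<exists>u1 u2. C2_with T u u1 u2 \<and>
        (\<forall>t. 0 < t \<and> t < T \<longrightarrow> u2 t + a t * f (u t) = 0) \<and>
        u1 0 = 0 \<and>
        u T = \<alpha> * integral {0..\<eta>} u) \<and>
     (\<forall>t\<in>{0..T}. u t \<ge> 0) \<and> (\<exists>t\<in>{0..T}. u t \<noteq> 0)"

end

theory Submission
  imports Defs "HOL-Complex_Analysis.Great_Picard"
begin

(*
  Shooting through a retarded problem.  For h > 0 the equation u'' = -a(t) f(u(t - h)) with
  u = c on (-\<infinity>, 0] is solved explicitly by the method of steps, so its solution depends
  continuously on c even though f is merely continuous.  Writing the solution as
  u = c - \<integral>\<^sub>0\<^sup>t (t - s) a(s) f(u(s - h)) ds, the nonlocal boundary defect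
  u(T) - \<alpha> \<integral>\<^sub>0\<^sup>\<eta> u satisfies  (1 - \<alpha>\<eta>) u(\<eta>) = defect + E(forcing), with E the integral
  in the denominator of \<Lambda>\<^sub>2.  For small c the bound f(u) \<le> k u, k < \<Lambda>\<^sub>1, makes the defect
  positive; for large c concavity keeps u \<ge> \<gamma> c, and f(u) \<ge> b u with b > \<Lambda>\<^sub>2 makes it
  negative.  The intermediate value theorem yields zero-defect solutions for h = T/(n+1);
  they are uniformly Lipschitz, so Arzela-Ascoli gives a uniform limit as h \<rightarrow> 0, which is a
  concave nonnegative solution of (P) with u(0) = c > 0.  Truncating f at the level of the
  large initial value keeps every forcing term bounded.
*)

section \<open>Iterated integrals\<close>

lemma integrable_on_initial_interval:
  fixes y :: "real \<Rightarrow> real"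
  assumes "continuous_on {0..T} y" "t \<le> T"
  shows "y integrable_on {0..t}"
  by (rule integrable_continuous_interval, rule continuous_on_subset[OF assms(1)]) (use assms in auto)

lemma integral_pos_if_pos_at:
  fixes g :: "real \<Rightarrow> real"
  assumes "continuous_on {p..q} g" "\<And>x. x \<in> {p..q} \<Longrightarrow> g x \<ge> 0"
    and "x1 \<in> {p..q}" "g x1 > 0" "p < q"
  shows "integral {p..q} g > 0"
proof -
  have "integral {p..q} g \<ge> 0"
    using assms(1,2) by (intro integral_nonneg integrable_continuous_interval) auto
  moreover have "integral {p..q} g \<noteq> 0"
    using integral_eq_0_iff[OF assms(1,5,2)] assms(3,4) by auto
  ultimately show ?thesis by simp
qed

text \<open>By Cauchy's formula these are \<open>\<integral>\<^sub>0\<^sup>t (t - s) y s ds\<close> and \<open>\<integral>\<^sub>0\<^sup>t (t - s)\<^sup>2/2 y s ds\<close>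
  (see \<open>twice_integral_eq_integral\<close>); the moment form makes them easy to differentiate.
  Both vanish for \<open>t \<le> 0\<close>.\<close>

definition twice_integral :: "(real \<Rightarrow> real) \<Rightarrow> real \<Rightarrow> real" where
  "twice_integral y t = t * integral {0..t} y - integral {0..t} (\<lambda>s. s * y s)"

definition thrice_integral :: "(real \<Rightarrow> real) \<Rightarrow> real \<Rightarrow> real" where
  "thrice_integral y t = (t\<^sup>2 * integral {0..t} y - 2 * t * integral {0..t} (\<lambda>s. s * y s)
     + integral {0..t} (\<lambda>s. s\<^sup>2 * y s)) / 2"

lemma twice_integral_nonpos: "t \<le> 0 \<Longrightarrow> twice_integral y t = 0"
  by (cases "t = 0") (auto simp: twice_integral_def)

lemma thrice_integral_0: "thrice_integral y 0 = 0"
  by (simp add: thrice_integral_def)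

lemma twice_integral_cong:
  "(\<And>s. s \<in> {0..t} \<Longrightarrow> y s = z s) \<Longrightarrow> twice_integral y t = twice_integral z t"
  unfolding twice_integral_def by (metis (no_types, lifting) integral_cong)

lemma has_real_derivative_twice_integral:
  assumes "continuous_on {0..T} y" "t \<in> {0..T}"
  shows "(twice_integral y has_real_derivative integral {0..t} y) (at t within {0..T})"
proof -
  have "continuous_on {0..T} (\<lambda>s. s * y s)" by (intro continuous_intros assms(1))
  note derivs = integral_has_real_derivative[OF assms(1,2)] integral_has_real_derivative[OF this assms(2)]
  show ?thesis
    unfolding twice_integral_def[abs_def] by (auto intro!: derivative_eq_intros derivs)
qed

lemma has_real_derivative_thrice_integral:
  assumes "continuous_on {0..T} y" "t \<in> {0..T}"
  shows "(thrice_integral y has_real_derivative twice_integral y t) (at t within {0..T})"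
proof -
  have "continuous_on {0..T} (\<lambda>s. s * y s)" "continuous_on {0..T} (\<lambda>s. s\<^sup>2 * y s)"
    by (intro continuous_intros assms(1))+
  note derivs = integral_has_real_derivative[OF assms(1,2)]
    integral_has_real_derivative[OF this(1) assms(2)] integral_has_real_derivative[OF this(2) assms(2)]
  show ?thesis
    unfolding thrice_integral_def[abs_def]
    by (rule derivative_eq_intros derivs refl | simp)+
      (simp add: twice_integral_def power2_eq_square field_simps)
qed

lemma has_integral_twice_integral:
  assumes "continuous_on {0..T} y" "0 \<le> e" "e \<le> T"
  shows "(twice_integral y has_integral thrice_integral y e) {0..e}"
proof -
  have "(twice_integral y has_integral (thrice_integral y e - thrice_integral y 0)) {0..e}"
  proof (rule fundamental_theorem_of_calculus)
    fix x assume "x \<in> {0..e}"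
    then have "(thrice_integral y has_real_derivative twice_integral y x) (at x within {0..T})"
      using assms by (intro has_real_derivative_thrice_integral) auto
    then show "(thrice_integral y has_vector_derivative twice_integral y x) (at x within {0..e})"
      unfolding has_real_derivative_iff_has_vector_derivative[symmetric]
      by (rule DERIV_subset) (use assms in auto)
  qed (use assms in auto)
  then show ?thesis by (simp add: thrice_integral_0)
qed

lemma twice_integral_eq_integral:
  assumes "continuous_on {0..T} y" "t \<le> T"
  shows "twice_integral y t = integral {0..t} (\<lambda>s. (t - s) * y s)"
proof -
  have "(\<lambda>s. t * y s) integrable_on {0..t}"
    using integrable_on_initial_interval[OF assms] by (rule integrable_on_mult_right)
  moreover have "(\<lambda>s. s * y s) integrable_on {0..t}"
    by (rule integrable_on_initial_interval[OF _ assms(2)]) (intro continuous_intros assms(1))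
  ultimately have "integral {0..t} (\<lambda>s. t * y s - s * y s)
      = integral {0..t} (\<lambda>s. t * y s) - integral {0..t} (\<lambda>s. s * y s)"
    by (rule integral_diff)
  then show ?thesis by (simp add: twice_integral_def left_diff_distrib)
qed

lemma twice_integral_diff:
  assumes "continuous_on {0..T} y" "continuous_on {0..T} z" "t \<le> T"
  shows "twice_integral (\<lambda>s. y s - z s) t = twice_integral y t - twice_integral z t"
proof -
  have "continuous_on {0..T} (\<lambda>s. y s - z s)" using assms by (intro continuous_intros)
  moreover have "(\<lambda>s. (t - s) * y s) integrable_on {0..t}" "(\<lambda>s. (t - s) * z s) integrable_on {0..t}"
    by (rule integrable_on_initial_interval[OF _ assms(3)], intro continuous_intros assms(1,2))+
  ultimately show ?thesis
    using assms by (simp add: twice_integral_eq_integral right_diff_distrib integral_diff)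
qed

lemma twice_integral_mono:
  assumes "continuous_on {0..T} y" "\<And>s. s \<in> {0..T} \<Longrightarrow> y s \<ge> 0" "t \<le> t'" "t' \<le> T"
  shows "twice_integral y t \<le> twice_integral y t'"
proof (cases "t \<le> 0")
  case True
  have "0 \<le> integral {0..t'} (\<lambda>s. (t' - s) * y s)"
    using assms by (intro integral_nonneg integrable_on_initial_interval[of T] continuous_intros) auto
  then show ?thesis using True twice_integral_eq_integral[OF assms(1,4)] by (simp add: twice_integral_nonpos)
next
  case False
  have tT: "t \<le> T" using assms by linarith
  have int: "(\<lambda>s. (t' - s) * y s) integrable_on {0..t}" "(\<lambda>s. (t' - s) * y s) integrable_on {0..t'}"
    by (rule integrable_on_initial_interval[of T], intro continuous_intros assms(1), use assms in auto)+
  have "integral {0..t} (\<lambda>s. (t - s) * y s) \<le> integral {0..t} (\<lambda>s. (t' - s) * y s)"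
    using assms tT
    by (intro integral_le int integrable_on_initial_interval[of T] continuous_intros mult_right_mono) auto
  also have "\<dots> \<le> integral {0..t'} (\<lambda>s. (t' - s) * y s)"
    using assms by (intro integral_subset_le int) auto
  finally show ?thesis using twice_integral_eq_integral[OF assms(1) tT] twice_integral_eq_integral[OF assms(1,4)] by simp
qed

lemma twice_integral_nonneg:
  assumes "continuous_on {0..T} y" "\<And>s. s \<in> {0..T} \<Longrightarrow> y s \<ge> 0" "t \<le> T"
  shows "twice_integral y t \<ge> 0"
  using twice_integral_mono[OF assms(1,2), of "min t 0" t] assms(3) twice_integral_nonpos[of "min t 0"]
  by simp

lemma twice_integral_lipschitz:
  assumes "continuous_on {0..T} y" "\<And>s. s \<in> {0..T} \<Longrightarrow> \<bar>y s\<bar> \<le> B" "t \<le> T" "t' \<le> T" "T \<ge> 0"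
  shows "\<bar>twice_integral y t - twice_integral y t'\<bar> \<le> T * B * \<bar>t - t'\<bar>"
proof -
  have B: "B \<ge> 0" using assms(2)[of 0] assms(5) by auto
  have slope: "norm (integral {0..z} y) \<le> T * B" if z: "z \<in> {0..T}" for z
  proof -
    have "norm (integral {0..z} y) \<le> B * (z - 0)"
      using z assms by (intro integral_bound continuous_on_subset[OF assms(1)]) auto
    also have "\<dots> \<le> T * B" using z B by (simp add: mult.commute mult_left_mono)
    finally show ?thesis .
  qed
  have clamp: "twice_integral y s = twice_integral y (max 0 s)" for s
    by (cases "s \<le> 0") (auto simp: twice_integral_nonpos max_def)
  have "\<bar>twice_integral y (max 0 t) - twice_integral y (max 0 t')\<bar> \<le> T * B * \<bar>max 0 t - max 0 t'\<bar>"
    using field_differentiable_bound[of "{0..T}" "twice_integral y" "\<lambda>z. integral {0..z} y" "T * B"]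
      has_real_derivative_twice_integral[OF assms(1)] slope assms(3,4,5)
    by simp
  also have "\<dots> \<le> T * B * \<bar>t - t'\<bar>"
    using B assms(5) by (intro mult_left_mono) (auto simp: max_def abs_if)
  finally show ?thesis using clamp by metis
qed

lemma twice_integral_abs_le:
  assumes "continuous_on {0..T} y" "\<And>s. s \<in> {0..T} \<Longrightarrow> \<bar>y s\<bar> \<le> B" "t \<in> {0..T}"
  shows "\<bar>twice_integral y t\<bar> \<le> T * B * T"
proof -
  have "\<bar>twice_integral y t - twice_integral y 0\<bar> \<le> T * B * \<bar>t - 0\<bar>"
    using assms by (intro twice_integral_lipschitz) auto
  also have "\<dots> \<le> T * B * T"
    using assms(2)[of 0] assms(3) by (intro mult_left_mono) auto
  finally show ?thesis by (simp add: twice_integral_nonpos)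
qed

text \<open>For \<open>y \<ge> 0\<close> the function \<open>twice_integral y\<close> is convex with value \<open>0\<close> at \<open>0\<close>.\<close>

lemma twice_integral_scaled_mono:
  assumes "continuous_on {0..T} y" "\<And>s. s \<in> {0..T} \<Longrightarrow> y s \<ge> 0" "0 \<le> \<eta>" "\<eta> \<le> T"
  shows "T * twice_integral y \<eta> \<le> \<eta> * twice_integral y T"
proof -
  have cont: "continuous_on {0..T} (\<lambda>s. (T - s) * y s)" "continuous_on {0..T} (\<lambda>s. (\<eta> - s) * y s)"
    by (intro continuous_intros assms(1))+
  have "T * twice_integral y \<eta> = integral {0..\<eta>} (\<lambda>s. T * ((\<eta> - s) * y s))"
    using twice_integral_eq_integral[OF assms(1,4)] by simp
  also have "\<dots> \<le> integral {0..\<eta>} (\<lambda>s. \<eta> * ((T - s) * y s))"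
  proof (rule integral_le)
    show "(\<lambda>s. T * ((\<eta> - s) * y s)) integrable_on {0..\<eta>}"
      "(\<lambda>s. \<eta> * ((T - s) * y s)) integrable_on {0..\<eta>}"
      using integrable_on_initial_interval[OF cont(1) assms(4)] integrable_on_initial_interval[OF cont(2) assms(4)]
      by (auto intro: integrable_on_mult_right)
    fix s assume s: "s \<in> {0..\<eta>}"
    have "T * (\<eta> - s) \<le> \<eta> * (T - s)" using s assms(4) by (simp add: algebra_simps mult_right_mono)
    then show "T * ((\<eta> - s) * y s) \<le> \<eta> * ((T - s) * y s)"
      using assms(2)[of s] s assms(4) mult_right_mono by (fastforce simp: mult.assoc[symmetric])
  qed
  also have "\<dots> = \<eta> * integral {0..\<eta>} (\<lambda>s. (T - s) * y s)" by simp
  also have "\<dots> \<le> \<eta> * integral {0..T} (\<lambda>s. (T - s) * y s)"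
    using assms integrable_on_initial_interval[OF cont(1)]
    by (intro mult_left_mono integral_subset_le) auto
  also have "\<dots> = \<eta> * twice_integral y T" using twice_integral_eq_integral[OF assms(1)] by simp
  finally show ?thesis .
qed

lemma twice_integral_le:
  assumes "continuous_on {0..T} y" "continuous_on {0..T} z" "\<And>s. s \<in> {0..T} \<Longrightarrow> y s \<le> z s" "t \<le> T"
  shows "twice_integral y t \<le> twice_integral z t"
proof -
  have "0 \<le> twice_integral (\<lambda>s. z s - y s) t"
    using assms by (intro twice_integral_nonneg[of T] continuous_on_diff) auto
  then show ?thesis using twice_integral_diff[OF assms(2,1,4)] by simp
qed

lemma twice_integral_scale: "twice_integral (\<lambda>s. y s * X) t = twice_integral y t * X"
  unfolding twice_integral_def mult.assoc[symmetric] integral_mult_left by (simp add: algebra_simps)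

lemma twice_integral_pos:
  assumes "continuous_on {0..T} a" "\<And>t. t \<in> {0..T} \<Longrightarrow> a t \<ge> 0" "t1 \<in> {0..<T}" "a t1 > 0"
  shows "twice_integral a T > 0"
  unfolding twice_integral_eq_integral[OF assms(1) order_refl] using assms
  by (intro integral_pos_if_pos_at[of 0 T _ t1] continuous_intros) auto

lemma uniform_limit_twice_integral:
  assumes lim: "uniform_limit {0..T} Y y F" and cont: "\<forall>\<^sub>F n in F. continuous_on {0..T} (Y n)"
    and y: "continuous_on {0..T} y" and "0 \<le> T"
  shows "uniform_limit {..T} (\<lambda>n. twice_integral (Y n)) (twice_integral y) F"
proof (rule uniform_limitI)
  fix e :: real assume "e > 0"
  define e' where "e' = e / (T * T + 1)"
  have "0 < 1 + T * T" using \<open>0 \<le> T\<close> by (simp add: add_pos_nonneg)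
  then have e': "e' > 0" "T * e' * T < e"
    using \<open>e > 0\<close> by (simp_all add: e'_def field_simps)
  from cont uniform_limitD[OF lim e'(1)]
  show "\<forall>\<^sub>F n in F. \<forall>t\<in>{..T}. dist (twice_integral (Y n) t) (twice_integral y t) < e"
  proof eventually_elim
    case (elim n)
    show ?case
    proof
      fix t assume t: "t \<in> {..T}"
      show "dist (twice_integral (Y n) t) (twice_integral y t) < e"
      proof (cases "t \<le> 0")
        case True then show ?thesis using \<open>e > 0\<close> by (simp add: twice_integral_nonpos)
      next
        case False
        have "continuous_on {0..T} (\<lambda>s. Y n s - y s)" using elim y by (intro continuous_on_diff)
        then have "\<bar>twice_integral (\<lambda>s. Y n s - y s) t\<bar> \<le> T * e' * T"
          using elim t False by (intro twice_integral_abs_le) (auto simp: dist_real_def less_imp_le)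
        then show ?thesis
          using twice_integral_diff[OF _ y, of "Y n" t] elim t e'(2)
          by (simp add: dist_real_def)
      qed
    qed
  qed
qed

section \<open>The constants \<open>\<gamma>\<close>, \<open>\<Lambda>\<^sub>1\<close>, \<open>\<Lambda>\<^sub>2\<close> and the boundary identity\<close>

lemma gamma_c_denominator_pos:
  fixes T \<eta> \<alpha> :: real
  assumes "0 < \<eta>" "\<eta> < T" "\<alpha> * \<eta> < 1"
  shows "0 < T - \<alpha> * \<eta>\<^sup>2"
proof -
  have "(\<alpha> * \<eta>) * \<eta> < 1 * \<eta>" using assms by (intro mult_strict_right_mono) auto
  then have "\<alpha> * \<eta>\<^sup>2 < \<eta>" by (simp add: power2_eq_square mult.assoc)
  with assms show ?thesis by simp
qed

lemma gamma_c_pos: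
  fixes T \<eta> \<alpha> :: real
  assumes "0 < \<eta>" "\<eta> < T" "0 < \<alpha>" "\<alpha> * \<eta> < 1"
  shows "0 < gamma_c T \<eta> \<alpha>"
  unfolding gamma_c_def using gamma_c_denominator_pos[OF assms(1,2,4)] assms by simp

lemma gamma_c_le_1:
  fixes T \<eta> \<alpha> :: real
  assumes "0 < \<eta>" "\<eta> < T" "\<alpha> * \<eta> < 1"
  shows "gamma_c T \<eta> \<alpha> \<le> 1"
proof -
  have "\<alpha> * \<eta> * T \<le> 1 * T" using assms by (intro mult_right_mono) auto
  then show ?thesis
    unfolding gamma_c_def using gamma_c_denominator_pos[OF assms]
    by (simp add: pos_divide_le_eq algebra_simps power2_eq_square)
qed

definition Lambda2_integral :: "real \<Rightarrow> real \<Rightarrow> real \<Rightarrow> (real \<Rightarrow> real) \<Rightarrow> real" where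
  "Lambda2_integral T \<eta> \<alpha> y = integral {\<eta>..T} (\<lambda>s. (T - s) * y s)
     + 1/2 * integral {0..\<eta>} (\<lambda>s. (2 * (T - \<eta>) + \<alpha> * (\<eta>\<^sup>2 - s\<^sup>2)) * y s)"

lemma Lambda1_eq_twice_integral:
  "continuous_on {0..T} a \<Longrightarrow> Lambda1 T \<eta> \<alpha> a = (1 - \<alpha> * \<eta>) / twice_integral a T"
  by (simp add: Lambda1_def twice_integral_eq_integral)

lemma Lambda2_eq_Lambda2_integral:
  "Lambda2 T \<eta> \<alpha> a = (1 - \<alpha> * \<eta>) / (gamma_c T \<eta> \<alpha> * Lambda2_integral T \<eta> \<alpha> a)"
  by (simp add: Lambda2_def Lambda2_integral_def)

lemma Lambda2_kernel_pos:
  fixes \<alpha> \<eta> T s :: real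
  assumes "0 \<le> \<alpha>" "\<eta> < T" "s \<in> {0..\<eta>}"
  shows "0 < 2 * (T - \<eta>) + \<alpha> * (\<eta>\<^sup>2 - s\<^sup>2)"
proof -
  have "s\<^sup>2 \<le> \<eta>\<^sup>2" using assms(3) power_mono[of s \<eta> 2] by auto
  then show ?thesis using assms by (intro add_pos_nonneg mult_nonneg_nonneg) auto
qed

lemma Lambda2_integral_mono:
  assumes "continuous_on {0..T} y" "continuous_on {0..T} z" "0 \<le> \<eta>" "\<eta> < T" "0 \<le> \<alpha>"
    and "\<And>s. s \<in> {0..T} \<Longrightarrow> y s \<le> z s"
  shows "Lambda2_integral T \<eta> \<alpha> y \<le> Lambda2_integral T \<eta> \<alpha> z"
proof -
  have sub: "{\<eta>..T} \<subseteq> {0..T}" "{0..\<eta>} \<subseteq> {0..T}" using assms(3,4) by auto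
  have "integral {\<eta>..T} (\<lambda>s. (T - s) * y s) \<le> integral {\<eta>..T} (\<lambda>s. (T - s) * z s)"
    using assms(6) sub
    by (intro integral_le integrable_continuous_interval continuous_intros mult_left_mono
        continuous_on_subset[OF assms(1)] continuous_on_subset[OF assms(2)]) auto
  moreover have "integral {0..\<eta>} (\<lambda>s. (2 * (T - \<eta>) + \<alpha> * (\<eta>\<^sup>2 - s\<^sup>2)) * y s)
      \<le> integral {0..\<eta>} (\<lambda>s. (2 * (T - \<eta>) + \<alpha> * (\<eta>\<^sup>2 - s\<^sup>2)) * z s)"
    using assms(6) sub Lambda2_kernel_pos[OF assms(5,4)]
    by (intro integral_le integrable_continuous_interval continuous_intros mult_left_mono
        continuous_on_subset[OF assms(1)] continuous_on_subset[OF assms(2)]) (auto intro: less_imp_le)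
  ultimately show ?thesis unfolding Lambda2_integral_def by simp
qed

lemma Lambda2_integral_scale:
  "Lambda2_integral T \<eta> \<alpha> (\<lambda>s. y s * X) = Lambda2_integral T \<eta> \<alpha> y * X"
  unfolding Lambda2_integral_def mult.assoc[symmetric] integral_mult_left by (simp add: algebra_simps)

lemma Lambda2_integral_pos:
  assumes "continuous_on {0..T} a" "\<And>t. t \<in> {0..T} \<Longrightarrow> a t \<ge> 0" "t1 \<in> {0..<T}" "a t1 > 0"
    and "0 < \<eta>" "\<eta> < T" "0 \<le> \<alpha>"
  shows "Lambda2_integral T \<eta> \<alpha> a > 0"
proof -
  have c1: "continuous_on {\<eta>..T} (\<lambda>s. (T - s) * a s)"
    using assms(5) by (intro continuous_intros continuous_on_subset[OF assms(1)]) auto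
  have c2: "continuous_on {0..\<eta>} (\<lambda>s. (2 * (T - \<eta>) + \<alpha> * (\<eta>\<^sup>2 - s\<^sup>2)) * a s)"
    using assms(6) by (intro continuous_intros continuous_on_subset[OF assms(1)]) auto
  have nn1: "\<And>s. s \<in> {\<eta>..T} \<Longrightarrow> 0 \<le> (T - s) * a s" using assms(2,5) by simp
  have nn2: "\<And>s. s \<in> {0..\<eta>} \<Longrightarrow> 0 \<le> (2 * (T - \<eta>) + \<alpha> * (\<eta>\<^sup>2 - s\<^sup>2)) * a s"
    using assms(2,6) Lambda2_kernel_pos[OF assms(7,6)] by (simp add: less_imp_le)
  have I1: "integral {\<eta>..T} (\<lambda>s. (T - s) * a s) \<ge> 0"
    using nn1 by (intro integral_nonneg integrable_continuous_interval c1)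
  have I2: "integral {0..\<eta>} (\<lambda>s. (2 * (T - \<eta>) + \<alpha> * (\<eta>\<^sup>2 - s\<^sup>2)) * a s) \<ge> 0"
    using nn2 by (intro integral_nonneg integrable_continuous_interval c2)
  show ?thesis
  proof (cases "\<eta> \<le> t1")
    case True
    then have "integral {\<eta>..T} (\<lambda>s. (T - s) * a s) > 0"
      using assms(3,4,6) by (intro integral_pos_if_pos_at[OF c1 nn1]) auto
    then show ?thesis unfolding Lambda2_integral_def using I2 by simp
  next
    case False
    then have "integral {0..\<eta>} (\<lambda>s. (2 * (T - \<eta>) + \<alpha> * (\<eta>\<^sup>2 - s\<^sup>2)) * a s) > 0"
      using assms(3,4,5) Lambda2_kernel_pos[OF assms(7,6), of t1]
      by (intro integral_pos_if_pos_at[OF c2 nn2, of t1]) auto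
    then show ?thesis unfolding Lambda2_integral_def using I1 by simp
  qed
qed

lemma integral_quadratic_weight:
  fixes y :: "real \<Rightarrow> real"
  assumes "continuous_on {0..T} y" "t \<le> T"
  shows "integral {0..t} (\<lambda>s. (p + q * s + r * s\<^sup>2) * y s)
    = p * integral {0..t} y + q * integral {0..t} (\<lambda>s. s * y s) + r * integral {0..t} (\<lambda>s. s\<^sup>2 * y s)"
proof -
  have "y integrable_on {0..t}" "(\<lambda>s. s * y s) integrable_on {0..t}" "(\<lambda>s. s\<^sup>2 * y s) integrable_on {0..t}"
    by (rule integrable_on_initial_interval[OF _ assms(2)], intro continuous_intros assms(1))+
  then have "(\<lambda>s. p * y s) integrable_on {0..t}" "(\<lambda>s. q * (s * y s)) integrable_on {0..t}"
    "(\<lambda>s. r * (s\<^sup>2 * y s)) integrable_on {0..t}"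
    by (auto intro: integrable_on_mult_right)
  then have "integral {0..t} (\<lambda>s. p * y s + q * (s * y s) + r * (s\<^sup>2 * y s))
    = integral {0..t} (\<lambda>s. p * y s) + integral {0..t} (\<lambda>s. q * (s * y s)) + integral {0..t} (\<lambda>s. r * (s\<^sup>2 * y s))"
    by (simp add: integral_add integrable_add)
  moreover have "(\<lambda>s. (p + q * s + r * s\<^sup>2) * y s) = (\<lambda>s. p * y s + q * (s * y s) + r * (s\<^sup>2 * y s))"
    by (simp add: algebra_simps)
  ultimately show ?thesis by (simp only: integral_mult_right)
qed

text \<open>This is where \<open>\<Lambda>\<^sub>2\<close> comes from: for \<open>u = c - twice_integral y\<close> the defect of the nonlocal
  boundary condition plus the \<open>\<Lambda>\<^sub>2\<close>-weighted integral of \<open>y = -u''\<close> recovers \<open>(1 - \<alpha>\<eta>) u(\<eta>)\<close>.\<close>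

lemma boundary_identity:
  assumes y: "continuous_on {0..T} y" and "0 \<le> \<eta>" "\<eta> \<le> T"
    and u: "\<And>t. t \<in> {0..T} \<Longrightarrow> u t = c - twice_integral y t"
  shows "(1 - \<alpha> * \<eta>) * u \<eta> = (u T - \<alpha> * integral {0..\<eta>} u) + Lambda2_integral T \<eta> \<alpha> y"
proof -
  define I0 I1 I2 where "I0 = integral {0..\<eta>} y" and "I1 = integral {0..\<eta>} (\<lambda>s. s * y s)"
    and "I2 = integral {0..\<eta>} (\<lambda>s. s\<^sup>2 * y s)"
  have int_u: "integral {0..\<eta>} u = \<eta> * c - thrice_integral y \<eta>"
  proof -
    have "((\<lambda>t. c - twice_integral y t) has_integral (\<eta> * c - thrice_integral y \<eta>)) {0..\<eta>}"
      using has_integral_diff[OF has_integral_const_real has_integral_twice_integral[OF y assms(2,3)]]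
      by (simp add: assms(2))
    moreover have "\<And>t. t \<in> {0..\<eta>} \<Longrightarrow> c - twice_integral y t = u t" using u assms(3) by simp
    ultimately show ?thesis by (metis (no_types, lifting) has_integral_cong integral_unique)
  qed
  have "integral {0..\<eta>} (\<lambda>s. (T - s) * y s) + integral {\<eta>..T} (\<lambda>s. (T - s) * y s)
      = integral {0..T} (\<lambda>s. (T - s) * y s)"
    using assms by (intro Henstock_Kurzweil_Integration.integral_combine
        integrable_continuous_interval continuous_intros) auto
  moreover have "integral {0..\<eta>} (\<lambda>s. (T + (-1) * s + 0 * s\<^sup>2) * y s) = T * I0 + (-1) * I1 + 0 * I2"
    "integral {0..\<eta>} (\<lambda>s. ((2 * (T - \<eta>) + \<alpha> * \<eta>\<^sup>2) + 0 * s + (- \<alpha>) * s\<^sup>2) * y s)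
       = (2 * (T - \<eta>) + \<alpha> * \<eta>\<^sup>2) * I0 + 0 * I1 + (- \<alpha>) * I2"
    unfolding I0_def I1_def I2_def by (intro integral_quadratic_weight[OF y] assms(3))+
  ultimately have L: "Lambda2_integral T \<eta> \<alpha> y = twice_integral y T - (T * I0 - I1)
      + 1/2 * ((2 * (T - \<eta>) + \<alpha> * \<eta>\<^sup>2) * I0 - \<alpha> * I2)"
    unfolding Lambda2_integral_def using twice_integral_eq_integral[OF y, of T]
    by (simp add: algebra_simps)
  have uT: "u T = c - twice_integral y T" and u\<eta>: "u \<eta> = c - twice_integral y \<eta>"
    using u assms by auto
  show ?thesis
    unfolding int_u L uT u\<eta>
    by (simp add: twice_integral_def thrice_integral_def I0_def I1_def I2_def field_simps power2_eq_square)
qed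

lemma pos_point_before_endpoint:
  fixes a :: "real \<Rightarrow> real"
  assumes "continuous_on {0..T} a" "t0 \<in> {0..T}" "a t0 > 0" "0 < T"
  obtains t1 where "t1 \<in> {0..<T}" "a t1 > 0"
proof (cases "t0 < T")
  case True
  then show ?thesis using that assms(2,3) by auto
next
  case False
  then have "t0 = T" using assms(2) by auto
  have "(a \<longlongrightarrow> a T) (at T within {0..T})"
    using assms(1,4) unfolding continuous_on_def by auto
  from order_tendstoD(1)[OF this, of 0] obtain d where d: "0 < d"
    "\<And>x. x \<in> {0..T} \<Longrightarrow> x \<noteq> T \<Longrightarrow> dist x T < d \<Longrightarrow> 0 < a x"
    using assms(3) \<open>t0 = T\<close> unfolding eventually_at by blast
  define t1 where "t1 = max 0 (T - d / 2)"
  have "t1 \<in> {0..<T}" "dist t1 T < d" using d(1) assms(4) by (auto simp: t1_def dist_real_def)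
  then show ?thesis using that d(2)[of t1] by auto
qed

lemma zero_of_ratio_tendsto:
  fixes f :: "real \<Rightarrow> real"
  assumes "continuous_on {0..} f" "((\<lambda>x. f x / x) \<longlongrightarrow> l) (at_right 0)"
  shows "f 0 = 0"
proof -
  have "(f \<longlongrightarrow> f 0) (at 0 within {0..})" using assms(1) unfolding continuous_on_def by simp
  then have cont: "(f \<longlongrightarrow> f 0) (at_right 0)" by (rule tendsto_within_subset) auto
  have "((\<lambda>x. x * (f x / x)) \<longlongrightarrow> 0) (at_right 0)"
    using tendsto_mult[OF tendsto_ident_at assms(2)] by simp
  moreover have "\<forall>\<^sub>F x in at_right 0. x * (f x / x) = f x"
    unfolding eventually_at_right_field by (intro exI[of _ 1]) auto
  ultimately have "(f \<longlongrightarrow> 0) (at_right 0)" using Lim_transform_eventually by blast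
  with cont show ?thesis using tendsto_unique[OF trivial_limit_at_right_real] by blast
qed

lemma sublinear_near_zero:
  fixes f :: "real \<Rightarrow> real"
  assumes "((\<lambda>x. f x / x) \<longlongrightarrow> l) (at_right 0)" "l < k" "f 0 = 0" "0 < C"
  obtains c where "0 < c" "c \<le> C" "\<And>z. z \<in> {0..c} \<Longrightarrow> f z \<le> k * z"
proof -
  obtain d where d: "0 < d" "\<And>x. 0 < x \<Longrightarrow> x < d \<Longrightarrow> f x / x < k"
    using order_tendstoD(2)[OF assms(1,2)] unfolding eventually_at_right_field by auto
  have "f z \<le> k * z" if "z \<in> {0..min (d / 2) C}" for z
  proof (cases "z = 0")
    case False
    then show ?thesis using that d(2)[of z] d(1) by (auto simp: pos_divide_less_eq less_imp_le)
  qed (use assms(3) in simp)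
  then show ?thesis using that[of "min (d / 2) C"] d(1) assms(4) by auto
qed

lemma superlinear_at_top:
  fixes f :: "real \<Rightarrow> real"
  assumes "((\<lambda>x. f x / x) \<longlongrightarrow> l) at_top" "b < l"
  obtains M where "0 < M" "\<And>z. M \<le> z \<Longrightarrow> b * z \<le> f z"
proof -
  obtain M0 where M0: "\<And>x. M0 \<le> x \<Longrightarrow> b < f x / x"
    using order_tendstoD(1)[OF assms] unfolding eventually_at_top_linorder by auto
  have "b * z \<le> f z" if "max M0 1 \<le> z" for z
    using that M0[of z] by (simp add: pos_less_divide_eq less_imp_le)
  then show ?thesis using that[of "max M0 1"] by simp
qed

section \<open>Shooting through the retarded problem\<close>

lemma lipschitz_sequence_uniform_subseq:
  fixes U :: "nat \<Rightarrow> real \<Rightarrow> real"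
  assumes lip: "\<And>n. L-lipschitz_on {0..T} (U n)" and bound: "\<And>n x. x \<in> {0..T} \<Longrightarrow> \<bar>U n x\<bar> \<le> M"
  obtains v r where "continuous_on {0..T} v" "strict_mono r" "uniform_limit {0..T} (U \<circ> r) v sequentially"
proof -
  have L: "L \<ge> 0" using lipschitz_on_nonneg[OF lip] .
  have equicont: "\<exists>d. 0 < d \<and> (\<forall>n y. y \<in> {0..T} \<and> norm (x - y) < d \<longrightarrow> norm (U n x - U n y) < e)"
    if "x \<in> {0..T}" "0 < e" for x e
  proof (intro exI[of _ "e / (L + 1)"] conjI allI impI)
    fix n y assume y: "y \<in> {0..T} \<and> norm (x - y) < e / (L + 1)"
    have "norm (U n x - U n y) \<le> L * norm (x - y)"
      using lipschitz_on_normD[OF lip] that y by blast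
    also have "\<dots> \<le> L * (e / (L + 1))" using y L by (intro mult_left_mono) auto
    also have "\<dots> < e" using L that by (simp add: field_simps)
    finally show "norm (U n x - U n y) < e" .
  qed (use that L in auto)
  have norm_bound: "norm (U n x) \<le> M" if "x \<in> {0..T}" for n x using bound[OF that] by simp
  show thesis
  proof (rule Arzela_Ascoli[OF compact_Icc norm_bound equicont])
    fix v and r :: "nat \<Rightarrow> nat"
    assume v: "continuous_on {0..T} v" and r: "strict_mono r"
      and conv: "\<And>e. 0 < e \<Longrightarrow> \<exists>N. \<forall>n x. n \<ge> N \<and> x \<in> {0..T} \<longrightarrow> norm (U (r n) x - v x) < e"
    have "uniform_limit {0..T} (U \<circ> r) v sequentially"
      unfolding uniform_limit_sequentially_iff dist_norm using conv by fastforce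
    with v r show thesis by (rule that)
  qed
qed

locale truncated_bvp =
  fixes T \<eta> \<alpha> :: real and a f :: "real \<Rightarrow> real" and R :: real
  assumes T_pos: "T > 0" and eta: "0 < \<eta>" "\<eta> < T" and alpha: "0 < \<alpha>" "\<alpha> * \<eta> < 1"
    and f_cont: "continuous_on {0..} f" and f_nonneg: "\<And>x. x \<ge> 0 \<Longrightarrow> f x \<ge> 0"
    and a_cont: "continuous_on {0..T} a" and a_nonneg: "\<And>t. t \<in> {0..T} \<Longrightarrow> a t \<ge> 0"
    and R_pos: "R > 0"
begin

definition f_trunc :: "real \<Rightarrow> real" where
  "f_trunc x = f (max 0 (min R x))"

lemma f_trunc_eq: "0 \<le> x \<Longrightarrow> x \<le> R \<Longrightarrow> f_trunc x = f x"
  by (simp add: f_trunc_def)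

lemma f_trunc_nonneg: "f_trunc x \<ge> 0"
  unfolding f_trunc_def by (rule f_nonneg) simp

lemma uniformly_continuous_f_trunc: "uniformly_continuous_on UNIV f_trunc"
proof -
  have "1-lipschitz_on UNIV (\<lambda>x. max 0 (min R x :: real))"
    by (rule lipschitz_onI) (auto simp: dist_real_def)
  then have clamp: "uniformly_continuous_on UNIV (\<lambda>x. max 0 (min R x :: real))"
    by (rule lipschitz_on_uniformly_continuous)
  have "range (\<lambda>x. max 0 (min R x :: real)) = {0..R}"
  proof (intro equalityI subsetI)
    fix x assume "x \<in> {0..R}"
    then show "x \<in> range (\<lambda>x. max 0 (min R x))" by (intro image_eqI[of _ _ x]) auto
  qed (use R_pos in auto)
  moreover have "uniformly_continuous_on {0..R} f"
    by (intro compact_uniformly_continuous continuous_on_subset[OF f_cont]) auto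
  ultimately show ?thesis
    unfolding f_trunc_def using uniformly_continuous_on_compose[OF clamp] by simp
qed

lemma f_trunc_bounded: "\<exists>M>0. \<forall>x. f_trunc x \<le> M"
proof -
  have "compact (f ` {0..R})"
    by (intro compact_continuous_image continuous_on_subset[OF f_cont]) auto
  then obtain B where B: "\<forall>z\<in>f ` {0..R}. \<bar>z\<bar> \<le> B" by (auto dest!: compact_imp_bounded simp: bounded_iff)
  have "f_trunc x \<le> max B 1" for x
  proof -
    have "max 0 (min R x) \<in> {0..R}" using R_pos by auto
    then have "\<bar>f_trunc x\<bar> \<le> B" using B unfolding f_trunc_def by blast
    then show ?thesis by simp
  qed
  then show ?thesis by (intro exI[of _ "max B 1"]) auto
qed

lemma a_bounded: "\<exists>A>0. \<forall>t\<in>{0..T}. a t \<le> A"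
proof -
  have "compact (a ` {0..T})" by (rule compact_continuous_image[OF a_cont]) auto
  then obtain B where "\<forall>z\<in>a ` {0..T}. \<bar>z\<bar> \<le> B" by (auto dest!: compact_imp_bounded simp: bounded_iff)
  then show ?thesis by (intro exI[of _ "max B 1"]) force
qed

definition f_max :: real where "f_max = (SOME M. M > 0 \<and> (\<forall>x. f_trunc x \<le> M))"
definition a_max :: real where "a_max = (SOME A. A > 0 \<and> (\<forall>t\<in>{0..T}. a t \<le> A))"

lemma f_max: "f_max > 0" "f_trunc x \<le> f_max"
  using someI_ex[OF f_trunc_bounded] unfolding f_max_def by auto

lemma a_max: "a_max > 0" "t \<in> {0..T} \<Longrightarrow> a t \<le> a_max"
  using someI_ex[OF a_bounded] unfolding a_max_def by auto

definition forcing :: "real \<Rightarrow> (real \<Rightarrow> real) \<Rightarrow> real \<Rightarrow> real" where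
  "forcing h u s = a s * f_trunc (u (s - h))"

lemma forcing_nonneg: "s \<in> {0..T} \<Longrightarrow> forcing h u s \<ge> 0"
  unfolding forcing_def using a_nonneg f_trunc_nonneg by simp

lemma forcing_abs_le:
  assumes "s \<in> {0..T}"
  shows "\<bar>forcing h u s\<bar> \<le> a_max * f_max"
proof -
  have "a s * f_trunc (u (s - h)) \<le> a_max * f_max"
    using assms a_nonneg a_max f_max f_trunc_nonneg by (intro mult_mono) auto
  then show ?thesis using forcing_nonneg[OF assms] by (simp add: forcing_def)
qed

lemma continuous_on_forcing:
  assumes "continuous_on {-h..T} u" "0 \<le> h"
  shows "continuous_on {0..T} (forcing h u)"
proof -
  have "continuous_on {0..T} (\<lambda>s. u (s - h))"
    by (rule continuous_on_compose2[OF assms(1)]) (use assms(2) in \<open>auto intro!: continuous_intros\<close>)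
  then have "continuous_on {0..T} (\<lambda>s. f_trunc (u (s - h)))"
    by (rule continuous_on_compose2[OF uniformly_continuous_imp_continuous[OF uniformly_continuous_f_trunc]]) auto
  then show ?thesis unfolding forcing_def[abs_def] by (intro continuous_intros a_cont)
qed

lemma uniform_limit_forcing:
  assumes "uniform_limit {0..T} (\<lambda>n s. U n (s - h n)) v F"
  shows "uniform_limit {0..T} (\<lambda>n. forcing (h n) (U n)) (forcing 0 v) F"
proof -
  have "uniform_limit {0..T} (\<lambda>n s. f_trunc (U n (s - h n))) (\<lambda>s. f_trunc (v s)) F"
    by (rule uniform_limit_compose_uniformly_continuous_on[OF assms uniformly_continuous_f_trunc]) auto
  moreover have "bounded (a ` {0..T})" by (intro compact_imp_bounded compact_continuous_image a_cont) auto
  moreover have "bounded ((\<lambda>s. f_trunc (v s)) ` {0..T})"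
    using f_max f_trunc_nonneg by (intro boundedI[of _ f_max]) auto
  ultimately have "uniform_limit {0..T} (\<lambda>n s. a s * f_trunc (U n (s - h n))) (\<lambda>s. a s * f_trunc (v s)) F"
    using uniform_lim_mult[OF uniform_limit_const[where S="{0..T}" and c=a and f=F]] by blast
  then show ?thesis by (simp add: forcing_def[abs_def])
qed

definition lip_const :: real where "lip_const = T * (a_max * f_max)"

lemma lip_const_nonneg: "lip_const \<ge> 0"
  unfolding lip_const_def using T_pos a_max f_max by simp

lemma lipschitz_on_sub_twice_integral:
  assumes "continuous_on {0..T} y" "\<And>s. s \<in> {0..T} \<Longrightarrow> \<bar>y s\<bar> \<le> a_max * f_max"
  shows "lip_const-lipschitz_on {..T} (\<lambda>t. c - twice_integral y t)"
proof (rule lipschitz_onI)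
  fix t t' assume "t \<in> {..T}" "t' \<in> {..T}"
  then show "dist (c - twice_integral y t) (c - twice_integral y t') \<le> lip_const * dist t t'"
    using twice_integral_lipschitz[OF assms, of t' t] T_pos
    by (simp add: dist_real_def lip_const_def abs_minus_commute)
qed (rule lip_const_nonneg)

text \<open>Method of steps: for \<open>h > 0\<close> the \<open>j\<close>-th iterate solves the retarded problem on
  \<open>(-\<infinity>, j h]\<close> (see \<open>delay_iterate_stable\<close>).\<close>

primrec delay_iterate :: "nat \<Rightarrow> real \<Rightarrow> real \<Rightarrow> real \<Rightarrow> real" where
  "delay_iterate 0 h c t = c"
| "delay_iterate (Suc j) h c t = c - twice_integral (forcing h (delay_iterate j h c)) t"

definition delay_solution :: "real \<Rightarrow> real \<Rightarrow> (real \<Rightarrow> real) \<Rightarrow> bool" where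
  "delay_solution h c u \<longleftrightarrow> lip_const-lipschitz_on {..T} u \<and> (\<forall>t\<le>0. u t = c) \<and>
     (\<forall>t\<in>{0..T}. u t = c - twice_integral (forcing h u) t)"

definition boundary_defect :: "(real \<Rightarrow> real) \<Rightarrow> real" where
  "boundary_defect u = u T - \<alpha> * integral {0..\<eta>} u"

lemma lipschitz_delay_iterate: "0 \<le> h \<Longrightarrow> lip_const-lipschitz_on {..T} (delay_iterate j h c)"
proof (induction j)
  case 0
  show ?case by (rule lipschitz_onI) (auto simp: lip_const_nonneg)
next
  case (Suc j)
  have "continuous_on {-h..T} (delay_iterate j h c)"
    using Suc by (intro continuous_on_subset[OF lipschitz_on_continuous_on[of lip_const]]) auto
  then have "continuous_on {0..T} (forcing h (delay_iterate j h c))"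
    using Suc.prems by (rule continuous_on_forcing)
  then show ?case using lipschitz_on_sub_twice_integral[OF _ forcing_abs_le] by simp
qed

lemma delay_iterate_stable:
  "0 < h \<Longrightarrow> t \<le> real j * h \<Longrightarrow> delay_iterate (Suc j) h c t = delay_iterate j h c t"
proof (induction j arbitrary: t)
  case 0
  then show ?case by (simp add: twice_integral_nonpos)
next
  case (Suc j)
  have "forcing h (delay_iterate (Suc j) h c) s = forcing h (delay_iterate j h c) s" if "s \<in> {0..t}" for s
  proof -
    have "s - h \<le> real j * h" using that Suc.prems by (simp add: algebra_simps)
    then show ?thesis using Suc.IH[OF Suc.prems(1)] by (simp only: forcing_def)
  qed
  then have "twice_integral (forcing h (delay_iterate (Suc j) h c)) t
      = twice_integral (forcing h (delay_iterate j h c)) t"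
    by (rule twice_integral_cong)
  then show ?case by simp
qed

lemma delay_solution_delay_iterate:
  assumes "0 < h" "T \<le> real N * h"
  shows "delay_solution h c (delay_iterate (Suc N) h c)"
proof -
  have "forcing h (delay_iterate (Suc N) h c) s = forcing h (delay_iterate N h c) s" if "s \<le> T" for s
    using delay_iterate_stable[OF assms(1), of "s - h" N] that assms by (simp only: forcing_def)
  then have "twice_integral (forcing h (delay_iterate (Suc N) h c)) t = twice_integral (forcing h (delay_iterate N h c)) t"
    if "t \<le> T" for t
    using that by (intro twice_integral_cong) simp
  moreover have "lip_const-lipschitz_on {..T} (delay_iterate (Suc N) h c)"
    using assms(1) by (intro lipschitz_delay_iterate) simp
  ultimately show ?thesis
    unfolding delay_solution_def by (auto simp: twice_integral_nonpos)
qed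

lemma uniform_limit_delay_iterate:
  assumes "0 \<le> h"
  shows "uniform_limit {..T} (\<lambda>c'. delay_iterate j h c') (delay_iterate j h c) (at c)"
proof -
  have init: "uniform_limit {..T} (\<lambda>c' t. c') (\<lambda>t. c) (at c)"
  proof (rule uniform_limitI)
    fix e :: real assume "e > 0"
    show "\<forall>\<^sub>F c' in at c. \<forall>t\<in>{..T}. dist c' c < e"
      by (rule eventually_mono[OF tendstoD[OF tendsto_ident_at \<open>e > 0\<close>]]) simp
  qed
  show ?thesis
  proof (induction j)
    case 0
    show ?case using init by simp
  next
    case (Suc j)
    have "uniform_limit {0..T} (\<lambda>c' s. delay_iterate j h c' (s - h)) (\<lambda>s. delay_iterate j h c (s - h)) (at c)"
    proof (rule uniform_limitI)
      fix e :: real assume "e > 0"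
      show "\<forall>\<^sub>F c' in at c. \<forall>s\<in>{0..T}. dist (delay_iterate j h c' (s - h)) (delay_iterate j h c (s - h)) < e"
        by (rule eventually_mono[OF uniform_limitD[OF Suc.IH \<open>e > 0\<close>]]) (use assms in auto)
    qed
    then have "uniform_limit {0..T} (\<lambda>c'. forcing h (delay_iterate j h c')) (forcing h (delay_iterate j h c)) (at c)"
      using uniform_limit_forcing[of "\<lambda>c'. delay_iterate j h c'" "\<lambda>_. h"] by (simp add: forcing_def[abs_def])
    moreover have "continuous_on {0..T} (forcing h (delay_iterate j h c'))" for c'
      using assms lipschitz_delay_iterate[OF assms]
      by (intro continuous_on_forcing continuous_on_subset[OF lipschitz_on_continuous_on]) auto
    ultimately have "uniform_limit {..T} (\<lambda>c'. twice_integral (forcing h (delay_iterate j h c')))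
        (twice_integral (forcing h (delay_iterate j h c))) (at c)"
      using T_pos by (intro uniform_limit_twice_integral always_eventually allI) (simp_all add: less_imp_le)
    with init show ?case by (simp add: uniform_limit_minus)
  qed
qed

lemma tendsto_boundary_defect:
  assumes lim: "uniform_limit {0..T} U u F" and cont: "\<And>n. continuous_on {0..T} (U n)" and "F \<noteq> bot"
  shows "((\<lambda>n. boundary_defect (U n)) \<longlongrightarrow> boundary_defect u) F"
proof -
  have sub: "{0..\<eta>} \<subseteq> {0..T}" using eta by auto
  obtain I J where I: "\<And>n. (U n has_integral I n) {0..\<eta>}" and J: "(u has_integral J) {0..\<eta>}"
    and "(I \<longlongrightarrow> J) F"
    using uniform_limit_integral[OF uniform_limit_on_subset[OF lim sub] continuous_on_subset[OF cont sub]]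
      assms(3) by blast
  moreover have "I = (\<lambda>n. integral {0..\<eta>} (U n))" "J = integral {0..\<eta>} u"
    using I J by (auto intro!: integral_unique[symmetric])
  ultimately have "((\<lambda>n. integral {0..\<eta>} (U n)) \<longlongrightarrow> integral {0..\<eta>} u) F" by simp
  moreover have "((\<lambda>n. U n T) \<longlongrightarrow> u T) F" using tendsto_uniform_limitI[OF lim] T_pos by simp
  ultimately show ?thesis unfolding boundary_defect_def by (intro tendsto_intros)
qed

lemma continuous_on_boundary_defect_iterate:
  assumes "0 \<le> h"
  shows "continuous_on S (\<lambda>c. boundary_defect (delay_iterate j h c))"
proof -
  have "((\<lambda>c'. boundary_defect (delay_iterate j h c')) \<longlongrightarrow> boundary_defect (delay_iterate j h c)) (at c)" for c
    using assms lipschitz_delay_iterate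
    by (intro tendsto_boundary_defect uniform_limit_on_subset[OF uniform_limit_delay_iterate]
        continuous_on_subset[OF lipschitz_on_continuous_on]) auto
  then show ?thesis unfolding continuous_on_def by (blast intro: tendsto_within_subset)
qed

lemma delay_solution_continuous: "delay_solution h c u \<Longrightarrow> continuous_on {..T} u"
  unfolding delay_solution_def using lipschitz_on_continuous_on[of lip_const] by blast

lemma delay_solution_forcing_continuous:
  "delay_solution h c u \<Longrightarrow> 0 \<le> h \<Longrightarrow> continuous_on {0..T} (forcing h u)"
  by (rule continuous_on_forcing[OF continuous_on_subset[OF delay_solution_continuous]]) auto

lemma delay_solution_antimono:
  assumes "delay_solution h c u" "0 \<le> h" "t \<le> t'" "t' \<le> T"
  shows "u t' \<le> u t"
proof -
  have "twice_integral (forcing h u) t \<le> twice_integral (forcing h u) t'"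
    using assms forcing_nonneg by (intro twice_integral_mono[OF delay_solution_forcing_continuous])
  moreover have "u s = c - twice_integral (forcing h u) s" if "s \<le> T" for s
    using assms(1) that twice_integral_nonpos[of s] unfolding delay_solution_def
    by (cases "s \<le> 0") auto
  ultimately show ?thesis using assms by simp
qed

lemma delay_solution_le_init:
  assumes "delay_solution h c u" "0 \<le> h" "t \<le> T"
  shows "u t \<le> c"
  using delay_solution_antimono[OF assms(1,2), of "min t 0" t] assms(1,3)
  unfolding delay_solution_def by simp

lemma delay_solution_integral_ge:
  assumes "delay_solution h c u" "0 \<le> h"
  shows "\<eta> * u \<eta> \<le> integral {0..\<eta>} u"
proof -
  have "integral {0..\<eta>} (\<lambda>_. u \<eta>) \<le> integral {0..\<eta>} u"
    using eta delay_solution_antimono[OF assms] continuous_on_subset[OF delay_solution_continuous[OF assms(1)]]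
    by (intro integral_le integrable_continuous_interval continuous_on_const) auto
  then show ?thesis using eta by simp
qed

lemma delay_solution_ge_end:
  assumes "delay_solution h c u" "0 \<le> h" "boundary_defect u \<ge> 0"
  shows "0 \<le> u T" "\<And>t. t \<le> T \<Longrightarrow> u T \<le> u t"
proof -
  have "(\<alpha> * \<eta>) * u T \<le> \<alpha> * (\<eta> * u \<eta>)"
    using delay_solution_antimono[OF assms(1,2), of \<eta> T] eta alpha by (simp add: mult_left_mono)
  also have "\<dots> \<le> \<alpha> * integral {0..\<eta>} u"
    using delay_solution_integral_ge[OF assms(1,2)] alpha by (simp add: mult_left_mono)
  also have "\<dots> \<le> u T" using assms(3) by (simp add: boundary_defect_def)
  finally have "0 \<le> (1 - \<alpha> * \<eta>) * u T" by (simp add: algebra_simps)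
  then show "0 \<le> u T" using alpha by (simp add: zero_le_mult_iff)
  show "\<And>t. t \<le> T \<Longrightarrow> u T \<le> u t" using delay_solution_antimono[OF assms(1,2)] by simp
qed

lemma boundary_defect_pos_small:
  assumes sol: "delay_solution h c u" and "0 \<le> h" "0 < c" "c \<le> R" "0 \<le> k"
    and f_le: "\<And>z. z \<in> {0..c} \<Longrightarrow> f z \<le> k * z"
    and k: "k * twice_integral a T < 1 - \<alpha> * \<eta>"
  shows "boundary_defect u > 0"
proof -
  have forcing_le: "forcing h u s \<le> a s * (k * c)" if s: "s \<in> {0..T}" for s
  proof -
    have z: "max 0 (min R (u (s - h))) \<in> {0..c}"
      using delay_solution_le_init[OF sol \<open>0 \<le> h\<close>, of "s - h"] s assms(2,3,4) by auto
    moreover have "k * max 0 (min R (u (s - h))) \<le> k * c" using z \<open>0 \<le> k\<close> by (intro mult_left_mono) auto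
    ultimately have "f_trunc (u (s - h)) \<le> k * c"
      unfolding f_trunc_def using f_le by fastforce
    then show ?thesis unfolding forcing_def using a_nonneg[OF s] by (rule mult_left_mono)
  qed
  have "twice_integral (forcing h u) T \<le> twice_integral (\<lambda>s. a s * (k * c)) T"
    using forcing_le delay_solution_forcing_continuous[OF sol \<open>0 \<le> h\<close>] a_cont
    by (intro twice_integral_le continuous_intros) auto
  then have "c - twice_integral a T * (k * c) \<le> u T"
    using sol T_pos unfolding delay_solution_def twice_integral_scale by auto
  moreover have "integral {0..\<eta>} u \<le> \<eta> * c"
  proof -
    have "integral {0..\<eta>} u \<le> integral {0..\<eta>} (\<lambda>_. c)"
      using eta delay_solution_le_init[OF sol \<open>0 \<le> h\<close>]
        continuous_on_subset[OF delay_solution_continuous[OF sol]]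
      by (intro integral_le integrable_continuous_interval continuous_on_const) auto
    then show ?thesis using eta by simp
  qed
  then have "\<alpha> * integral {0..\<eta>} u \<le> \<alpha> * (\<eta> * c)" using alpha by (simp add: mult_left_mono)
  moreover have "0 < c * (1 - \<alpha> * \<eta> - k * twice_integral a T)" using \<open>0 < c\<close> k by simp
  ultimately show ?thesis unfolding boundary_defect_def by (simp add: algebra_simps)
qed

lemma delay_solution_end_ge:
  assumes sol: "delay_solution h c u" and "0 \<le> h" "boundary_defect u \<ge> 0"
  shows "gamma_c T \<eta> \<alpha> * c \<le> u T"
proof -
  define y where "y = forcing h u"
  have u: "u t = c - twice_integral y t" if "t \<in> {0..T}" for t
    using sol that unfolding delay_solution_def y_def by blast
  have "T * twice_integral y \<eta> \<le> \<eta> * twice_integral y T"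
    unfolding y_def using eta forcing_nonneg
    by (intro twice_integral_scaled_mono delay_solution_forcing_continuous[OF sol \<open>0 \<le> h\<close>]) auto
  moreover have uT: "u T = c - twice_integral y T" and u\<eta>: "u \<eta> = c - twice_integral y \<eta>"
    using u eta by auto
  ultimately have concave: "(T - \<eta>) * c + \<eta> * u T \<le> T * u \<eta>"
    unfolding uT u\<eta> by (simp add: algebra_simps)
  have "\<alpha> * (\<eta> * u \<eta>) \<le> \<alpha> * integral {0..\<eta>} u"
    using delay_solution_integral_ge[OF sol \<open>0 \<le> h\<close>] alpha by (intro mult_left_mono) auto
  also have "\<dots> \<le> u T" using assms(3) by (simp add: boundary_defect_def)
  finally have "T * u T \<ge> (\<alpha> * \<eta>) * (T * u \<eta>)" using T_pos by (simp add: algebra_simps mult_left_mono)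
  moreover have "(\<alpha> * \<eta>) * (T * u \<eta>) \<ge> (\<alpha> * \<eta>) * ((T - \<eta>) * c + \<eta> * u T)"
    using concave alpha eta by (intro mult_left_mono) auto
  ultimately have "\<alpha> * \<eta> * (T - \<eta>) * c \<le> (T - \<alpha> * \<eta>\<^sup>2) * u T"
    by (simp add: algebra_simps power2_eq_square)
  then show ?thesis
    using gamma_c_denominator_pos[OF eta alpha(2)] unfolding gamma_c_def by (simp add: divide_simps mult.commute)
qed

lemma boundary_defect_neg_large:
  assumes sol: "delay_solution h c u" and "0 \<le> h" "0 < c" "c \<le> R" "0 \<le> b"
    and f_ge: "\<And>z. z \<in> {gamma_c T \<eta> \<alpha> * c..c} \<Longrightarrow> b * z \<le> f z"
    and b: "1 - \<alpha> * \<eta> < b * gamma_c T \<eta> \<alpha> * Lambda2_integral T \<eta> \<alpha> a"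
  shows "boundary_defect u < 0"
proof (rule ccontr)
  assume "\<not> boundary_defect u < 0"
  then have defect: "boundary_defect u \<ge> 0" by simp
  define X where "X = b * (gamma_c T \<eta> \<alpha> * c)"
  have forcing_ge: "a s * X \<le> forcing h u s" if s: "s \<in> {0..T}" for s
  proof -
    have "gamma_c T \<eta> \<alpha> * c \<le> u (s - h)" "u (s - h) \<le> c"
      using delay_solution_end_ge[OF sol \<open>0 \<le> h\<close> defect] delay_solution_ge_end(2)[OF sol \<open>0 \<le> h\<close> defect]
        delay_solution_le_init[OF sol \<open>0 \<le> h\<close>] s \<open>0 \<le> h\<close> by (auto intro: order_trans)
    moreover have "0 \<le> gamma_c T \<eta> \<alpha> * c" using gamma_c_pos[OF eta alpha] \<open>0 < c\<close> by simp
    ultimately have "X \<le> f_trunc (u (s - h))"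
      using f_ge \<open>0 \<le> b\<close> \<open>c \<le> R\<close> unfolding X_def
      by (auto simp: f_trunc_eq intro: order_trans mult_left_mono)
    then show ?thesis unfolding forcing_def using a_nonneg[OF s] by (rule mult_left_mono)
  qed
  have "(1 - \<alpha> * \<eta>) * c < (b * gamma_c T \<eta> \<alpha> * Lambda2_integral T \<eta> \<alpha> a) * c"
    using b \<open>0 < c\<close> by (rule mult_strict_right_mono)
  also have "\<dots> = Lambda2_integral T \<eta> \<alpha> a * X" unfolding X_def by simp
  also have "\<dots> = Lambda2_integral T \<eta> \<alpha> (\<lambda>s. a s * X)" by (rule Lambda2_integral_scale[symmetric])
  also have "\<dots> \<le> Lambda2_integral T \<eta> \<alpha> (forcing h u)"
    using forcing_ge eta alpha delay_solution_forcing_continuous[OF sol \<open>0 \<le> h\<close>]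
    by (intro Lambda2_integral_mono continuous_intros a_cont) auto
  also have "\<dots> = (1 - \<alpha> * \<eta>) * u \<eta> - boundary_defect u"
    using boundary_identity[of T "forcing h u" \<eta> u c \<alpha>] sol eta delay_solution_forcing_continuous[OF sol \<open>0 \<le> h\<close>]
    unfolding delay_solution_def boundary_defect_def by simp
  also have "\<dots> \<le> (1 - \<alpha> * \<eta>) * c"
  proof -
    have "(1 - \<alpha> * \<eta>) * u \<eta> \<le> (1 - \<alpha> * \<eta>) * c"
      using delay_solution_le_init[OF sol \<open>0 \<le> h\<close>, of \<eta>] eta alpha by (intro mult_left_mono) auto
    then show ?thesis using defect by linarith
  qed
  finally show False by simp
qed

lemma exists_zero_defect_iterate:
  assumes "0 < h" "T \<le> real N * h" "0 < cs" "cs \<le> R"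
    and small: "\<And>u. delay_solution h cs u \<Longrightarrow> boundary_defect u > 0"
    and large: "\<And>u. delay_solution h R u \<Longrightarrow> boundary_defect u < 0"
  shows "\<exists>c. cs \<le> c \<and> c \<le> R \<and> boundary_defect (delay_iterate (Suc N) h c) = 0"
proof -
  have "continuous_on {cs..R} (\<lambda>c. boundary_defect (delay_iterate (Suc N) h c))"
    using assms(1) by (intro continuous_on_boundary_defect_iterate) simp
  moreover have "boundary_defect (delay_iterate (Suc N) h R) \<le> 0"
    using large[OF delay_solution_delay_iterate[OF assms(1,2)]] by simp
  moreover have "0 \<le> boundary_defect (delay_iterate (Suc N) h cs)"
    using small[OF delay_solution_delay_iterate[OF assms(1,2)]] by simp
  ultimately show ?thesis using IVT2'[of "\<lambda>c. boundary_defect (delay_iterate (Suc N) h c)" R 0 cs] assms(4)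
    by blast
qed

lemma boundary_defect_cong:
  assumes "\<And>t. t \<in> {0..T} \<Longrightarrow> u t = v t"
  shows "boundary_defect u = boundary_defect v"
proof -
  have "integral {0..\<eta>} u = integral {0..\<eta>} v" using assms eta by (intro integral_cong) auto
  then show ?thesis unfolding boundary_defect_def using assms T_pos by simp
qed

lemma delay_solution_limit:
  assumes sol: "\<And>n. delay_solution (h n) (c n) (U n)" and h: "\<And>n. 0 \<le> h n" "h \<longlonglongrightarrow> 0"
    and c: "c \<longlonglongrightarrow> c0" and v: "continuous_on {0..T} v" and lim: "uniform_limit {0..T} U v sequentially"
  defines "u \<equiv> \<lambda>t. c0 - twice_integral (forcing 0 v) t"
  shows "delay_solution 0 c0 u" "\<And>t. t \<in> {0..T} \<Longrightarrow> v t = u t"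
proof -
  have shifted: "uniform_limit {0..T} (\<lambda>n s. U n (s - h n)) v sequentially"
  proof (rule uniform_limitI)
    fix e :: real assume "e > 0"
    have "e / 2 > 0" using \<open>e > 0\<close> by simp
    have "(\<lambda>n. lip_const * h n) \<longlonglongrightarrow> 0" using tendsto_mult[OF tendsto_const h(2), of lip_const] by simp
    from order_tendstoD(2)[OF this \<open>e / 2 > 0\<close>]
    have "\<forall>\<^sub>F n in sequentially. lip_const * h n < e / 2" .
    from this uniform_limitD[OF lim \<open>e / 2 > 0\<close>]
    show "\<forall>\<^sub>F n in sequentially. \<forall>s\<in>{0..T}. dist (U n (s - h n)) (v s) < e"
    proof eventually_elim
      case (elim n)
      show ?case
      proof
        fix s assume s: "s \<in> {0..T}"
        have "dist (U n (s - h n)) (U n s) \<le> lip_const * dist (s - h n) s"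
          using sol[of n] s h(1)[of n] unfolding delay_solution_def by (intro lipschitz_onD) auto
        then have "dist (U n (s - h n)) (U n s) < e / 2" using elim h(1)[of n] by (simp add: dist_real_def)
        moreover have "dist (U n s) (v s) < e / 2" using elim s by blast
        ultimately show "dist (U n (s - h n)) (v s) < e"
          using dist_triangle[of "U n (s - h n)" "v s" "U n s"] by linarith
      qed
    qed
  qed
  have cont_forcing: "continuous_on {0..T} (forcing 0 v)" using v by (intro continuous_on_forcing) auto
  have "\<forall>\<^sub>F n in sequentially. continuous_on {0..T} (forcing (h n) (U n))"
    using delay_solution_forcing_continuous[OF sol h(1)] by (intro always_eventually allI)
  then have "uniform_limit {..T} (\<lambda>n. twice_integral (forcing (h n) (U n))) (twice_integral (forcing 0 v)) sequentially"
    using uniform_limit_twice_integral[OF uniform_limit_forcing[OF shifted] _ cont_forcing] T_pos by simp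
  then have "(\<lambda>n. c n - twice_integral (forcing (h n) (U n)) t) \<longlonglongrightarrow> u t" if "t \<in> {0..T}" for t
    unfolding u_def using that by (intro tendsto_diff c tendsto_uniform_limitI) auto
  moreover have "U n t = c n - twice_integral (forcing (h n) (U n)) t" if "t \<in> {0..T}" for n t
    using sol[of n] that unfolding delay_solution_def by blast
  ultimately have "(\<lambda>n. U n t) \<longlonglongrightarrow> u t" if "t \<in> {0..T}" for t
    using that by simp
  then show vu: "v t = u t" if "t \<in> {0..T}" for t
    using LIMSEQ_unique[OF tendsto_uniform_limitI[OF lim that]] that by blast
  have "forcing 0 u s = forcing 0 v s" if "s \<in> {0..T}" for s using vu that by (simp add: forcing_def)
  then have "twice_integral (forcing 0 u) t = twice_integral (forcing 0 v) t" if "t \<le> T" for t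
    using that by (intro twice_integral_cong) auto
  moreover have "lip_const-lipschitz_on {..T} u"
    unfolding u_def using cont_forcing forcing_abs_le by (rule lipschitz_on_sub_twice_integral)
  moreover have "u t = c0 - twice_integral (forcing 0 v) t" for t unfolding u_def ..
  ultimately show "delay_solution 0 c0 u"
    unfolding delay_solution_def by (simp add: twice_integral_nonpos)
qed

lemma positive_solution_of_delay_solution:
  assumes sol: "delay_solution 0 c u" and "boundary_defect u = 0" "0 < c" "c \<le> R"
  shows "positive_solution_P T \<eta> \<alpha> a f u"
proof -
  define y where "y = forcing 0 u"
  have y: "continuous_on {0..T} y" unfolding y_def using sol by (rule delay_solution_forcing_continuous) simp
  have u: "u t = c - twice_integral y t" if "t \<in> {0..T}" for t
    using sol that unfolding delay_solution_def y_def by blast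
  have range: "0 \<le> u t" "u t \<le> R" if "t \<in> {0..T}" for t
    using delay_solution_ge_end[OF sol _ eq_refl[OF assms(2)[symmetric]]]
      delay_solution_le_init[OF sol, of t] that assms(4) by force+
  have "(u has_real_derivative - integral {0..t} y) (at t within {0..T})" if t: "t \<in> {0..T}" for t
  proof (rule has_field_derivative_transform_within[where d=1])
    show "((\<lambda>t. c - twice_integral y t) has_real_derivative - integral {0..t} y) (at t within {0..T})"
      using has_real_derivative_twice_integral[OF y t] by (auto intro!: derivative_eq_intros)
  qed (use t u in auto)
  moreover have "((\<lambda>t. - integral {0..t} y) has_real_derivative - y t) (at t within {0..T})"
    if "t \<in> {0..T}" for t
    using integral_has_real_derivative[OF y that] by (rule DERIV_minus)
  moreover have "- y t + a t * f (u t) = 0" if "0 < t" "t < T" for t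
    using range[of t] that by (simp add: y_def forcing_def f_trunc_eq)
  moreover have "u T = \<alpha> * integral {0..\<eta>} u" using assms(2) by (simp add: boundary_defect_def)
  moreover have "u 0 \<noteq> 0" using u[of 0] T_pos \<open>0 < c\<close> by (simp add: twice_integral_nonpos)
  ultimately show ?thesis
    unfolding positive_solution_P_def C2_with_def using y range T_pos
    by (intro conjI exI[of _ "\<lambda>t. - integral {0..t} y"] exI[of _ "\<lambda>t. - y t"] bexI[of _ 0])
      (auto intro: continuous_intros)
qed

theorem exists_positive_solution:
  assumes "0 < cs" "cs \<le> R"
    and small: "\<And>h u. 0 \<le> h \<Longrightarrow> delay_solution h cs u \<Longrightarrow> boundary_defect u > 0"
    and large: "\<And>h u. 0 \<le> h \<Longrightarrow> delay_solution h R u \<Longrightarrow> boundary_defect u < 0"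
  shows "\<exists>u. positive_solution_P T \<eta> \<alpha> a f u"
proof -
  define h where "h n = T / real (Suc n)" for n
  have h: "0 < h n" "T \<le> real (Suc n) * h n" for n using T_pos by (auto simp: h_def)
  have h0: "0 \<le> h n" for n using h(1)[of n] by simp
  define c where "c n = (SOME c. cs \<le> c \<and> c \<le> R \<and> boundary_defect (delay_iterate (Suc (Suc n)) (h n) c) = 0)"
    for n
  have c: "cs \<le> c n" "c n \<le> R" and zero: "boundary_defect (delay_iterate (Suc (Suc n)) (h n) (c n)) = 0" for n
    using someI_ex[OF exists_zero_defect_iterate[OF h(1,2)[of n] assms(1,2) small[OF h0[of n]] large[OF h0[of n]]]]
    unfolding c_def by blast+
  define U where "U n = delay_iterate (Suc (Suc n)) (h n) (c n)" for n
  have sol: "delay_solution (h n) (c n) (U n)" for n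
    unfolding U_def using h by (rule delay_solution_delay_iterate)
  have zero_U: "boundary_defect (U n) = 0" for n unfolding U_def by (rule zero)
  have "lip_const-lipschitz_on {0..T} (U n)" for n
  proof (rule lipschitz_on_subset)
    show "lip_const-lipschitz_on {..T} (U n)" using sol[of n] unfolding delay_solution_def by blast
  qed auto
  moreover have "\<bar>U n t\<bar> \<le> R" if "t \<in> {0..T}" for n t
  proof -
    have "0 \<le> U n T" "U n T \<le> U n t"
      using delay_solution_ge_end[OF sol[of n] h0[of n]] zero_U[of n] that by auto
    moreover have "U n t \<le> c n" using delay_solution_le_init[OF sol[of n] h0[of n]] that by auto
    ultimately show ?thesis using c(2)[of n] by simp
  qed
  ultimately obtain v r where v: "continuous_on {0..T} v" and r: "strict_mono r"
    and lim: "uniform_limit {0..T} (U \<circ> r) v sequentially"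
    by (rule lipschitz_sequence_uniform_subseq)
  have c_lim: "(\<lambda>n. c (r n)) \<longlonglongrightarrow> v 0"
    using tendsto_uniform_limitI[OF lim, of 0] sol T_pos unfolding delay_solution_def by simp
  have "h \<longlonglongrightarrow> 0" unfolding h_def using LIMSEQ_Suc[OF lim_const_over_n[of T]] by simp
  then have "(\<lambda>n. h (r n)) \<longlonglongrightarrow> 0" using LIMSEQ_subseq_LIMSEQ[OF _ r] by (simp add: o_def)
  note limit = delay_solution_limit[OF sol h0 this c_lim v lim[unfolded o_def]]
  define u where "u = (\<lambda>t. v 0 - twice_integral (forcing 0 v) t)"
  have "(\<lambda>n. boundary_defect ((U \<circ> r) n)) \<longlonglongrightarrow> boundary_defect v"
    using sol h0 by (intro tendsto_boundary_defect[OF lim] continuous_on_subset[OF delay_solution_continuous]) auto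
  then have "boundary_defect v = 0"
    using zero_U LIMSEQ_unique[OF _ tendsto_const] by simp
  then have "boundary_defect u = 0" using boundary_defect_cong[OF limit(2)] by (simp add: u_def)
  moreover have "cs \<le> v 0" "v 0 \<le> R"
    using LIMSEQ_le_const[OF c_lim] LIMSEQ_le_const2[OF c_lim] c by blast+
  ultimately show ?thesis
    using positive_solution_of_delay_solution[OF limit(1)[folded u_def]] \<open>0 < cs\<close> by auto
qed

end

lemma slope_below_Lambda1:
  fixes K \<alpha> \<eta> \<alpha>1 \<theta>1 :: real
  assumes "0 < K" "\<alpha> * \<eta> < 1" "0 \<le> \<alpha>1" "\<theta>1 \<le> 1" "\<alpha>1 < \<theta>1 * ((1 - \<alpha> * \<eta>) / K)"
  obtains k where "0 \<le> k" "\<alpha>1 < k" "k * K < 1 - \<alpha> * \<eta>"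
proof -
  have "\<theta>1 * ((1 - \<alpha> * \<eta>) / K) \<le> 1 * ((1 - \<alpha> * \<eta>) / K)"
    using assms by (intro mult_right_mono) auto
  then obtain k where "\<alpha>1 < k" "k < (1 - \<alpha> * \<eta>) / K" using assms(5) dense by force
  then show ?thesis using that assms(1,3) by (simp add: pos_less_divide_eq)
qed

lemma slope_above_Lambda2:
  fixes \<gamma> E \<alpha> \<eta> \<beta>1 \<theta>2 :: real
  assumes "0 < \<gamma>" "\<gamma> \<le> 1" "1 \<le> \<theta>2" "0 < E" "\<alpha> * \<eta> < 1"
    and "\<theta>2 / \<gamma> * ((1 - \<alpha> * \<eta>) / (\<gamma> * E)) < \<beta>1"
  obtains b where "0 \<le> b" "b < \<beta>1" "1 - \<alpha> * \<eta> < b * \<gamma> * E"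
proof -
  have pos: "0 < (1 - \<alpha> * \<eta>) / (\<gamma> * E)" using assms by simp
  have "1 \<le> \<theta>2 / \<gamma>" using assms by (simp add: le_divide_eq)
  then have "1 * ((1 - \<alpha> * \<eta>) / (\<gamma> * E)) \<le> \<theta>2 / \<gamma> * ((1 - \<alpha> * \<eta>) / (\<gamma> * E))"
    using pos by (intro mult_right_mono) auto
  then obtain b where b: "(1 - \<alpha> * \<eta>) / (\<gamma> * E) < b" "b < \<beta>1" using assms(6) dense by force
  moreover have "0 \<le> b" using pos b(1) by simp
  moreover have "1 - \<alpha> * \<eta> < b * \<gamma> * E" using b(1) assms(1,4) by (simp add: pos_divide_less_eq mult.assoc)
  ultimately show ?thesis using that by blast
qed

theorem corollary5p2:
  fixes T \<eta> \<alpha> \<alpha>1 \<beta>1 \<theta>1 \<theta>2 t0 :: real and f a :: "real \<Rightarrow> real"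
  assumes "T > 0" and "0 < \<eta>" and "\<eta> < T" and "0 < \<alpha>" and "\<alpha> < 1 / \<eta>"
    and "continuous_on {0..} f" and "\<forall>x\<ge>0. f x \<ge> 0"
    and "continuous_on {0..T} a" and "\<forall>t\<in>{0..T}. a t \<ge> 0"
    and "t0 \<in> {0..T}" and "a t0 > 0"
    and "((\<lambda>x. f x / x) \<longlongrightarrow> \<alpha>1) (at_right 0)"
    and "0 < \<theta>1" and "\<theta>1 \<le> 1" and "0 \<le> \<alpha>1" and "\<alpha>1 < \<theta>1 * Lambda1 T \<eta> \<alpha> a"
    and "((\<lambda>x. f x / x) \<longlongrightarrow> \<beta>1) at_top"
    and "\<theta>2 \<ge> 1" and "\<beta>1 > \<theta>2 / gamma_c T \<eta> \<alpha> * Lambda2 T \<eta> \<alpha> a"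
  shows "\<exists>u. positive_solution_P T \<eta> \<alpha> a f u"
proof -
  have \<alpha>\<eta>: "\<alpha> * \<eta> < 1" using assms(2,5) by (simp add: pos_less_divide_eq)
  define \<gamma> where "\<gamma> = gamma_c T \<eta> \<alpha>"
  have \<gamma>: "0 < \<gamma>" "\<gamma> \<le> 1" unfolding \<gamma>_def using gamma_c_pos gamma_c_le_1 assms(2-4) \<alpha>\<eta> by auto
  obtain t1 where t1: "t1 \<in> {0..<T}" "a t1 > 0" using pos_point_before_endpoint assms(1,8,10,11) by blast
  have K1: "0 < twice_integral a T" using twice_integral_pos assms(8,9) t1 by blast
  have K2: "0 < Lambda2_integral T \<eta> \<alpha> a" using Lambda2_integral_pos assms(2-4,8,9) t1 by simp
  obtain k where k: "0 \<le> k" "\<alpha>1 < k" "k * twice_integral a T < 1 - \<alpha> * \<eta>"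
    using slope_below_Lambda1[OF K1 \<alpha>\<eta> assms(15,14)] assms(16) Lambda1_eq_twice_integral[OF assms(8)] by auto
  obtain b where b: "0 \<le> b" "b < \<beta>1" "1 - \<alpha> * \<eta> < b * \<gamma> * Lambda2_integral T \<eta> \<alpha> a"
    using slope_above_Lambda2[OF \<gamma> assms(18) K2 \<alpha>\<eta>] assms(19) by (auto simp: \<gamma>_def Lambda2_eq_Lambda2_integral)
  obtain M where M: "0 < M" "\<And>z. M \<le> z \<Longrightarrow> b * z \<le> f z"
    using superlinear_at_top[OF assms(17) b(2)] by auto
  obtain cs where cs: "0 < cs" "cs \<le> M / \<gamma>" "\<And>z. z \<in> {0..cs} \<Longrightarrow> f z \<le> k * z"
    using sublinear_near_zero[OF assms(12) k(2) zero_of_ratio_tendsto[OF assms(6,12)] divide_pos_pos[OF M(1) \<gamma>(1)]]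
    by blast
  interpret truncated_bvp T \<eta> \<alpha> a f "M / \<gamma>"
    using assms(1-4,6-9) \<alpha>\<eta> M(1) \<gamma>(1) by unfold_locales auto
  show ?thesis
  proof (rule exists_positive_solution[OF cs(1,2)])
    show "0 < boundary_defect u" if "0 \<le> h" "delay_solution h cs u" for h u
      using boundary_defect_pos_small[OF that(2,1) cs(1,2) k(1) cs(3) k(3)] .
    have "b * z \<le> f z" if "z \<in> {gamma_c T \<eta> \<alpha> * (M / \<gamma>)..M / \<gamma>}" for z
      using M(2) that \<gamma>(1) by (simp add: \<gamma>_def)
    then show "boundary_defect u < 0" if "0 \<le> h" "delay_solution h (M / \<gamma>) u" for h u
      using boundary_defect_neg_large[OF that(2,1) _ order_refl b(1)] M(1) \<gamma>(1) b(3)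
      by (simp add: \<gamma>_def)
  qed
qed

end
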